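(* Let $m\ge3$, $\rho=\frac12+\frac1m$, $0<\delta\le\frac\pi{m+2}$. For $x\ge0$ put $Q(x)=x^m+P(x)+\lambda$, $g=\frac{Q'(x)}{8Q(x)^{3/2}}$, $h=\frac{Q'(x)}{4Q(x)}$ and $$\begin{pmatrix}s_{11}&s_{12}\\ s_{21}&s_{22}\end{pmatrix}=\frac1{1+g^2}\begin{pmatrix}hg-g'g&-hg^2+g'\\ -hg^2-g'&-hg-g'g\end{pmatrix},$$ where $'$ denotes $d/dx$ and $Q^{3/2}$ uses the principal branch. Then for $j,k\in\{1,2\}$, $$\int_0^\infty|s_{jk}(x,\lambda)|\,dx=O\bigl(|\lambda|^{-\rho}\bigr)$$ as $\lambda\to\infty$ in $|\arg\lambda|\le\pi-\delta$, uniformly for $a$ in any compact subset of $\mathbb C^m$.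
   Context: $a=(a_1,\dots,a_m)\in\mathbb C^m$ and $P(x)=a_1x^{m-1}+\dots+a_m$. *)

theory Defs
  imports "HOL-Analysis.Analysis"
begin

text \<open>Coefficient vector a = (a_1,...,a_m) is encoded as a function nat => complex;
  only the values a 1, ..., a m are used.  The space nat => complex carries the
  product topology (HOL-Analysis Function_Topology), so compactness of a set of
  coefficient functions projects to compactness in C^m.\<close>

definition Ppoly :: "nat \<Rightarrow> (nat \<Rightarrow> complex) \<Rightarrow> complex \<Rightarrow> complex" where
  "Ppoly m a z = (\<Sum>i=1..m. a i * z ^ (m - i))"

definition Qf :: "nat \<Rightarrow> (nat \<Rightarrow> complex) \<Rightarrow> complex \<Rightarrow> real \<Rightarrow> complex" where
  "Qf m a lam x = (of_real x) ^ m + Ppoly m a (of_real x) + lam"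

definition gf :: "nat \<Rightarrow> (nat \<Rightarrow> complex) \<Rightarrow> complex \<Rightarrow> real \<Rightarrow> complex" where
  "gf m a lam x = vector_derivative (Qf m a lam) (at x) / (8 * (Qf m a lam x) powr (3/2))"

definition hf :: "nat \<Rightarrow> (nat \<Rightarrow> complex) \<Rightarrow> complex \<Rightarrow> real \<Rightarrow> complex" where
  "hf m a lam x = vector_derivative (Qf m a lam) (at x) / (4 * Qf m a lam x)"

definition sf :: "nat \<Rightarrow> (nat \<Rightarrow> complex) \<Rightarrow> nat \<Rightarrow> nat \<Rightarrow> complex \<Rightarrow> real \<Rightarrow> complex" where
  "sf m a j k lam x =
    (let g = gf m a lam x; h = hf m a lam x;
         g' = vector_derivative (gf m a lam) (at x) in
     (if j = 1 \<and> k = 1 then h*g - g'*g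
      else if j = 1 \<and> k = 2 then - h*g^2 + g'
      else if j = 2 \<and> k = 1 then - h*g^2 - g'
      else - h*g - g'*g) / (1 + g^2))"

end

theory Submission
  imports Defs
begin

(* Put L = |lam|, W = x^m + L and E = W^(1/m), so that E^m = W and x <= E.
   If |arg lam| <= pi - delta then |x^m + lam| >= c0 (x^m + L) with c0 = sqrt((1 - cos delta)/2).
   Once L is large compared with A >= sum |a_i|, the lower-order part P(x) is at most half of
   that, so |Q| >= (c0/2) E^m and Q(x) avoids the branch cut (-inf,0] of the principal power.
   Together with |Q'| <= m(1+A) E^(m-1) and |Q''| <= m^2(1+A) E^(m-2) this gives
   |g| = O(1/(E sqrt W)) (in particular |g| <= 1/2) and |h g|, |g'| = O(1/(E^2 sqrt W)),
   hence every entry satisfies |s_jk(x)| = O(1/(E^2 sqrt W)) = O(L^(-1/2) / (x0^2 + x^2))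
   with x0 = L^(1/m).  Since the integral of 1/(x0^2 + x^2) over [0,inf) is pi/(2 x0), the
   integral of |s_jk| is O(L^(-1/2 - 1/m)). *)

lemma integral_inverse_sum_squares:
  fixes c :: real assumes c: "c > 0"
  shows "set_integrable lborel {0..} (\<lambda>x. 1/(c^2+x^2))"
    "(\<integral>x\<in>{0..}. 1/(c^2+x^2) \<partial>lborel) = pi/(2*c)"
proof -
  let ?F = "\<lambda>x. arctan (x/c) / c"
  have pos: "\<And>x. c^2+x^2 > 0" using c by (simp add: add_pos_nonneg)
  have deriv: "(?F has_real_derivative 1/(c^2+x^2)) (at x)" for x
  proof -
    have "(?F has_real_derivative (1/(1+(x/c)^2)) * (1/c) / c) (at x)"
      using c by (auto intro!: derivative_eq_intros simp: divide_inverse)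
    moreover have "(1/(1+(x/c)^2)) * (1/c) / c = 1/(c^2+x^2)"
    proof -
      have "c * (c^2+x^2) > 0" using c pos[of x] by simp
      then show ?thesis using c by (simp add: field_simps power2_eq_square)
    qed
    ultimately show ?thesis by simp
  qed
  have lim0: "((?F \<circ> real_of_ereal) \<longlongrightarrow> 0) (at_right 0)"
    unfolding zero_ereal_def ereal_tendsto_simps
    using c by (auto intro!: tendsto_eq_intros)
  have "LIM x at_top. inverse c * x :> at_top"
    by (rule filterlim_tendsto_pos_mult_at_top[OF tendsto_const]) (use c in \<open>auto simp: filterlim_ident\<close>)
  then have "LIM x at_top. x / c :> at_top" by (simp add: divide_inverse mult.commute)
  then have "((\<lambda>x. arctan (x/c)) \<longlongrightarrow> pi/2) at_top"
    by (rule filterlim_compose[OF tendsto_arctan_at_top])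
  then have "(?F \<longlongrightarrow> (pi/2)/c) at_top"
    by (intro tendsto_divide) (use c in auto)
  then have liminf: "((?F \<circ> real_of_ereal) \<longlongrightarrow> pi/(2*c)) (at_left \<infinity>)"
    unfolding ereal_tendsto_simps by simp
  note FTC = interval_integral_FTC_nonneg[where a=0 and b=\<infinity> and F="?F"
      and f="\<lambda>x. 1/(c^2+x^2)", OF _ deriv _ _ lim0 liminf]
  have int_open: "set_integrable lborel {0<..} (\<lambda>x. 1/(c^2+x^2))"
    and "(LBINT x=0..\<infinity>. 1/(c^2+x^2)) = pi/(2*c)"
    using FTC pos by (auto simp: zero_ereal_def less_imp_le[OF pos] intro!: continuous_on_divide)
  then have val_open: "(\<integral>x\<in>{0<..}. 1/(c^2+x^2) \<partial>lborel) = pi/(2*c)"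
    by (simp add: interval_lebesgue_integral_def zero_ereal_def)
  have "set_integrable lborel {0..} f = set_integrable lborel {0<..} f" for f :: "real \<Rightarrow> real"
    by (rule set_integrable_discrete_difference[where X="{0}"]) auto
  moreover have "(\<integral>x\<in>{0..}. f x \<partial>lborel) = (\<integral>x\<in>{0<..}. f x \<partial>lborel)" for f :: "real \<Rightarrow> real"
    by (rule set_integral_discrete_difference[where X="{0}"]) auto
  ultimately show "set_integrable lborel {0..} (\<lambda>x. 1/(c^2+x^2))"
    "(\<integral>x\<in>{0..}. 1/(c^2+x^2) \<partial>lborel) = pi/(2*c)"
    using int_open val_open by simp_all
qed

definition dPz :: "nat \<Rightarrow> (nat \<Rightarrow> complex) \<Rightarrow> complex \<Rightarrow> complex" where
  "dPz m a z = (\<Sum>i=1..m. a i * (of_nat (m-i) * z^(m-i-1)))"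
definition ddPz :: "nat \<Rightarrow> (nat \<Rightarrow> complex) \<Rightarrow> complex \<Rightarrow> complex" where
  "ddPz m a z = (\<Sum>i=1..m. a i * (of_nat (m-i) * (of_nat (m-i-1) * z^(m-i-1-1))))"
definition Qz :: "nat \<Rightarrow> (nat \<Rightarrow> complex) \<Rightarrow> complex \<Rightarrow> complex \<Rightarrow> complex" where
  "Qz m a lam z = z^m + Ppoly m a z + lam"
definition dQz :: "nat \<Rightarrow> (nat \<Rightarrow> complex) \<Rightarrow> complex \<Rightarrow> complex" where
  "dQz m a z = of_nat m * z^(m-1) + dPz m a z"
definition ddQz :: "nat \<Rightarrow> (nat \<Rightarrow> complex) \<Rightarrow> complex \<Rightarrow> complex" where
  "ddQz m a z = of_nat m * (of_nat (m-1) * z^(m-1-1)) + ddPz m a z"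
definition gz :: "nat \<Rightarrow> (nat \<Rightarrow> complex) \<Rightarrow> complex \<Rightarrow> complex \<Rightarrow> complex" where
  "gz m a lam z = dQz m a z / (8 * Qz m a lam z powr (3/2))"
definition hz :: "nat \<Rightarrow> (nat \<Rightarrow> complex) \<Rightarrow> complex \<Rightarrow> complex \<Rightarrow> complex" where
  "hz m a lam z = dQz m a z / (4 * Qz m a lam z)"
definition dgz :: "nat \<Rightarrow> (nat \<Rightarrow> complex) \<Rightarrow> complex \<Rightarrow> complex \<Rightarrow> complex" where
  "dgz m a lam z = (ddQz m a z * (8 * Qz m a lam z powr (3/2))
       - (8 * ((3/2) * Qz m a lam z powr (3/2 - 1) * dQz m a z)) * dQz m a z)
       / (8 * Qz m a lam z powr (3/2)) ^ Suc (Suc 0)"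
definition sz :: "nat \<Rightarrow> (nat \<Rightarrow> complex) \<Rightarrow> complex \<Rightarrow> nat \<Rightarrow> nat \<Rightarrow> complex \<Rightarrow> complex" where
  "sz m a lam j k z =
    (let g = gz m a lam z; h = hz m a lam z; g' = dgz m a lam z in
     (if j = 1 \<and> k = 1 then h*g - g'*g
      else if j = 1 \<and> k = 2 then - h*g^2 + g'
      else if j = 2 \<and> k = 1 then - h*g^2 - g'
      else - h*g - g'*g) / (1 + g^2))"

lemma has_field_derivative_Ppoly: "(Ppoly m a has_field_derivative dPz m a z) (at z)"
  unfolding Ppoly_def[abs_def] dPz_def
  by (auto intro!: derivative_eq_intros sum.cong simp: ac_simps)

lemma has_field_derivative_dPz: "(dPz m a has_field_derivative ddPz m a z) (at z)"
  unfolding dPz_def[abs_def] ddPz_def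
  by (auto intro!: derivative_eq_intros sum.cong simp: ac_simps)

lemma has_field_derivative_Qz: "(Qz m a lam has_field_derivative dQz m a z) (at z)"
  unfolding Qz_def[abs_def] dQz_def
  by (auto intro!: derivative_eq_intros has_field_derivative_Ppoly)

lemma has_field_derivative_dQz: "(dQz m a has_field_derivative ddQz m a z) (at z)"
  unfolding dQz_def[abs_def] ddQz_def
  by (auto intro!: derivative_eq_intros has_field_derivative_dPz)

text \<open>Off the branch cut of the principal power, dgz (written in the shape produced by the
  chain and quotient rules) is the derivative of gz.\<close>
lemma has_field_derivative_gz:
  assumes "Qz m a lam z \<notin> \<real>\<^sub>\<le>\<^sub>0"
  shows "(gz m a lam has_field_derivative dgz m a lam z) (at z)"
proof -
  have "((\<lambda>z. Qz m a lam z powr (3/2)) has_field_derivative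
        (3/2) * Qz m a lam z powr (3/2 - 1) * dQz m a z) (at z)"
    by (rule DERIV_chain2[OF has_field_derivative_powr[OF assms] has_field_derivative_Qz])
  then show ?thesis
    unfolding gz_def[abs_def] dgz_def
    by (rule DERIV_quotient[OF has_field_derivative_dQz DERIV_cmult]) (use assms in auto)
qed

lemma Qf_eq_Qz: "Qf m a lam = (\<lambda>x. Qz m a lam (of_real x))"
  by (auto simp: Qf_def Qz_def)

lemma vector_derivative_Qf: "vector_derivative (Qf m a lam) (at x) = dQz m a (of_real x)"
  unfolding Qf_eq_Qz
  by (rule vector_derivative_at, rule has_vector_derivative_real_field, rule has_field_derivative_Qz)

lemma gf_eq_gz: "gf m a lam = (\<lambda>x. gz m a lam (of_real x))"
  by (rule ext) (simp add: gf_def gz_def vector_derivative_Qf, simp add: Qf_def Qz_def)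

lemma hf_eq_hz: "hf m a lam = (\<lambda>x. hz m a lam (of_real x))"
  by (rule ext) (simp add: hf_def hz_def vector_derivative_Qf, simp add: Qf_def Qz_def)

lemma sf_eq_sz:
  assumes "Qz m a lam (of_real x) \<notin> \<real>\<^sub>\<le>\<^sub>0"
  shows "sf m a j k lam x = sz m a lam j k (of_real x)"
proof -
  have "vector_derivative (gf m a lam) (at x) = dgz m a lam (of_real x)"
    unfolding gf_eq_gz
    by (rule vector_derivative_at, rule has_vector_derivative_real_field,
        rule has_field_derivative_gz[OF assms])
  then show ?thesis by (simp add: sf_def sz_def gf_eq_gz hf_eq_hz)
qed

lemma isCont_sz:
  assumes cut: "Qz m a lam z \<notin> \<real>\<^sub>\<le>\<^sub>0" and denom: "1 + (gz m a lam z)^2 \<noteq> 0"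
  shows "isCont (sz m a lam j k) z"
proof -
  have Q: "isCont (Qz m a lam) z" "isCont (dQz m a) z" "isCont (ddQz m a) z"
    by (auto intro: DERIV_isCont has_field_derivative_Qz has_field_derivative_dQz
        simp: ddQz_def[abs_def] ddPz_def[abs_def] intro!: continuous_intros)
  have "Qz m a lam z \<noteq> 0" using cut by auto
  then have "isCont (gz m a lam) z" "isCont (hz m a lam) z" "isCont (dgz m a lam) z"
    using DERIV_isCont[OF has_field_derivative_gz[OF cut]] cut Q
    by (auto simp: hz_def[abs_def] dgz_def[abs_def] intro!: continuous_intros)
  then show ?thesis
    using denom unfolding sz_def[abs_def] Let_def
    by (cases "j = 1 \<and> k = 1"; cases "j = 1 \<and> k = 2"; cases "j = 2 \<and> k = 1")
       (auto intro!: continuous_intros)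
qed

text \<open>The constant sin(delta/2), written without the half angle, that measures how far the
  sector |arg lam| \<le> pi - delta stays from the negative real axis.\<close>
definition sector_const :: "real \<Rightarrow> real" where
  "sector_const \<delta> = sqrt ((1 - cos \<delta>)/2)"

lemma sector_const_pos: "0 < \<delta> \<Longrightarrow> \<delta> \<le> pi \<Longrightarrow> sector_const \<delta> > 0"
  using cos_monotone_0_pi[of 0 \<delta>] by (simp add: sector_const_def)

lemma norm_add_sector:
  fixes lam :: complex and t \<delta> :: real
  assumes "t \<ge> 0" "0 < \<delta>" "\<delta> \<le> pi" "\<bar>Arg lam\<bar> \<le> pi - \<delta>"
  shows "norm (of_real t + lam) \<ge> sector_const \<delta> * (t + norm lam)"
proof (cases "lam = 0")
  case True
  have "sqrt ((1 - cos \<delta>)/2) \<le> 1" by simp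
  then show ?thesis using True assms(1) by (simp add: sector_const_def mult_left_le_one_le)
next
  case False
  define L where "L = norm lam"
  define \<theta> where "\<theta> = Arg lam"
  have Re_lam: "Re lam = L * cos \<theta>" using cos_Arg[OF False] False by (simp add: L_def \<theta>_def)
  have "cos \<theta> = cos \<bar>\<theta>\<bar>" by (simp add: abs_real_def)
  also have "cos \<bar>\<theta>\<bar> \<ge> cos (pi - \<delta>)"
    by (rule cos_monotone_0_pi_le) (use assms in \<open>auto simp: \<theta>_def\<close>)
  finally have cos_\<theta>: "cos \<theta> \<ge> - cos \<delta>" by simp
  have "0 \<le> 1 + cos \<delta>" using cos_ge_minus_one[of \<delta>] by linarith
  then have nonneg: "0 \<le> (1 + cos \<delta>)/2 * (t - L)^2" by simp
  have "(norm (of_real t + lam))^2 = t^2 + 2*t*Re lam + L^2"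
    unfolding L_def cmod_power2 by (simp add: power2_eq_square algebra_simps)
  also have "\<dots> \<ge> t^2 + L^2 - 2*t*L*cos \<delta>"
    using mult_left_mono[OF cos_\<theta>, of "2*t*L"] Re_lam assms(1) by (simp add: L_def algebra_simps)
  also have "t^2 + L^2 - 2*t*L*cos \<delta> = (1 - cos \<delta>)/2 * (t+L)^2 + (1 + cos \<delta>)/2 * (t - L)^2"
    by (simp add: power2_eq_square field_simps)
  also have "\<dots> \<ge> (1 - cos \<delta>)/2 * (t+L)^2"
    using nonneg by linarith
  also have "(1 - cos \<delta>)/2 * (t+L)^2 = (sqrt ((1 - cos \<delta>)/2) * (t + L))^2"
    using cos_le_one[of \<delta>] by (simp add: power_mult_distrib)
  finally show ?thesis unfolding L_def[symmetric] sector_const_def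
    by (rule power2_le_imp_le) simp
qed

lemma norm_coefficient_sum_le:
  fixes x E A c :: real and a f :: "nat \<Rightarrow> complex"
  assumes x: "0 \<le> x" "x \<le> E" "1 \<le> E" and A: "(\<Sum>i=1..m. norm (a i)) \<le> A"
    and f: "\<And>i. i \<in> {1..m} \<Longrightarrow> norm (f i) \<le> c * x^(k i)" "\<And>i. i \<in> {1..m} \<Longrightarrow> k i \<le> n"
    and c: "c \<ge> 0"
  shows "norm (\<Sum>i=1..m. a i * f i) \<le> A * (c * E^n)"
proof -
  have "norm (\<Sum>i=1..m. a i * f i) \<le> (\<Sum>i=1..m. norm (a i) * (c * E^n))"
  proof (rule order.trans[OF norm_sum sum_mono])
    fix i assume i: "i \<in> {1..m}"
    have "x^(k i) \<le> E^(k i)" by (rule power_mono[OF x(2,1)])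
    also have "\<dots> \<le> E^n" by (rule power_increasing[OF f(2)[OF i] x(3)])
    finally have "norm (f i) \<le> c * E^n" using f(1)[OF i] c by (meson mult_left_mono order.trans)
    then show "norm (a i * f i) \<le> norm (a i) * (c * E^n)"
      unfolding norm_mult by (rule mult_left_mono) auto
  qed
  also have "\<dots> = (\<Sum>i=1..m. norm (a i)) * (c * E^n)" by (simp add: sum_distrib_right)
  also have "\<dots> \<le> A * (c * E^n)"
    by (rule mult_right_mono[OF A]) (use c x in simp)
  finally show ?thesis .
qed

lemma polynomial_part_bounds:
  fixes x E A :: real
  assumes x: "0 \<le> x" "x \<le> E" "1 \<le> E" and A: "(\<Sum>i=1..m. norm (a i)) \<le> A"
  shows "norm (Ppoly m a (of_real x)) \<le> A * E^(m-1)"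
    "norm (dQz m a (of_real x)) \<le> real m * (1+A) * E^(m-1)"
    "norm (ddQz m a (of_real x)) \<le> real m * real m * (1+A) * E^(m-2)"
proof -
  have "norm (Ppoly m a (of_real x)) \<le> A * (1 * E^(m-1))"
    unfolding Ppoly_def
    by (rule norm_coefficient_sum_le[OF x A, where k="\<lambda>i. m-i"]) (use x in \<open>auto simp: norm_power\<close>)
  then show "norm (Ppoly m a (of_real x)) \<le> A * E^(m-1)" by simp
  have dP: "norm (dPz m a (of_real x)) \<le> A * (m * E^(m-1))"
    unfolding dPz_def
  proof (rule norm_coefficient_sum_le[OF x A, where k="\<lambda>i. m-i-1"])
    fix i assume "i \<in> {1..m}"
    have "real (m - i) \<le> m" by simp
    then show "norm (of_nat (m - i) * complex_of_real x ^ (m - i - 1)) \<le> real m * x ^ (m - i - 1)"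
      by (simp add: norm_mult norm_power mult_right_mono x(1))
  qed auto
  have "norm (of_nat m * complex_of_real x ^ (m - 1)) \<le> m * E^(m-1)"
    using power_mono[OF x(2,1), of "m-1"] x(1) by (simp add: norm_mult norm_power mult_left_mono)
  then have "norm (dQz m a (of_real x)) \<le> m * E^(m-1) + A * (m * E^(m-1))"
    unfolding dQz_def by (rule order.trans[OF norm_triangle_ineq add_mono[OF _ dP]])
  then show "norm (dQz m a (of_real x)) \<le> real m * (1+A) * E^(m-1)"
    by (simp add: algebra_simps)
  have ddP: "norm (ddPz m a (of_real x)) \<le> A * ((m*m) * E^(m-2))"
    unfolding ddPz_def
  proof (rule norm_coefficient_sum_le[OF x A, where k="\<lambda>i. m-i-1-1"])
    fix i assume "i \<in> {1..m}"
    have "(m - i) * (m - i - 1) \<le> m * m" by (intro mult_le_mono) auto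
    then have "real (m - i) * real (m - i - 1) \<le> real (m * m)"
      by (metis of_nat_le_iff of_nat_mult)
    then show "norm (of_nat (m - i) * (of_nat (m - i - 1) * complex_of_real x ^ (m - i - 1 - 1)))
         \<le> real (m*m) * x ^ (m - i - 1 - 1)"
      by (simp add: norm_mult norm_power mult_right_mono x(1) mult.assoc[symmetric])
  qed auto
  have "real m * (real (m-1) * x^(m-2)) \<le> m * (m * E^(m-2))"
    using power_mono[OF x(2,1), of "m-2"] x by (intro mult_left_mono mult_mono) auto
  then have "norm (of_nat m * (of_nat (m - 1) * complex_of_real x ^ (m - 1 - 1))) \<le> (m*m) * E^(m-2)"
    by (simp add: norm_mult norm_power x(1) mult.assoc numeral_2_eq_2)
  then have "norm (ddQz m a (of_real x)) \<le> (m*m) * E^(m-2) + A * ((m*m) * E^(m-2))"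
    unfolding ddQz_def by (rule order.trans[OF norm_triangle_ineq add_mono[OF _ ddP]])
  then show "norm (ddQz m a (of_real x)) \<le> real m * real m * (1+A) * E^(m-2)"
    by (simp add: algebra_simps)
qed

lemma Qz_lower_bound:
  fixes x \<delta> :: real
  defines "c0 \<equiv> sector_const \<delta>"
  assumes x: "x \<ge> 0" and \<delta>: "0 < \<delta>" "\<delta> \<le> pi" and Arg: "\<bar>Arg lam\<bar> \<le> pi - \<delta>"
    and lam: "norm lam \<ge> 1"
    and P: "norm (Ppoly m a (of_real x)) \<le> c0/2 * (x^m + norm lam)"
  shows "norm (Qz m a lam (of_real x)) \<ge> c0/2 * (x^m + norm lam)"
    "Qz m a lam (of_real x) \<notin> \<real>\<^sub>\<le>\<^sub>0"
proof -
  have c0_pos: "c0 > 0" unfolding c0_def by (rule sector_const_pos[OF \<delta>])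
  have "x^m \<ge> 0" using x by simp
  then have W_pos: "x^m + norm lam > 0" using lam by linarith
  have Q_split: "Qz m a lam (of_real x) = (of_real (x^m) + lam) + Ppoly m a (of_real x)"
    by (simp add: Qz_def)
  have "norm (of_real (x^m) + lam) \<ge> c0 * (x^m + norm lam)"
    unfolding c0_def by (rule norm_add_sector) (use x \<delta> Arg in auto)
  moreover have "norm (Qz m a lam (of_real x))
      \<ge> norm (of_real (x^m) + lam) - norm (Ppoly m a (of_real x))"
    unfolding Q_split by (metis norm_diff_ineq)
  ultimately show "norm (Qz m a lam (of_real x)) \<ge> c0/2 * (x^m + norm lam)" using P by simp
  show "Qz m a lam (of_real x) \<notin> \<real>\<^sub>\<le>\<^sub>0"
  proof
    assume "Qz m a lam (of_real x) \<in> \<real>\<^sub>\<le>\<^sub>0"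
    then obtain r where r: "r \<le> 0" "Qz m a lam (of_real x) = of_real r"
      by (metis complex_nonpos_Reals_iff complex_is_Real_iff of_real_Re)
    have "norm (of_real (x^m - r) + lam) \<ge> c0 * ((x^m - r) + norm lam)"
      unfolding c0_def by (rule norm_add_sector) (use x \<delta> Arg r in \<open>auto intro: order.trans[OF _ zero_le_power]\<close>)
    moreover have "of_real (x^m - r) + lam = - Ppoly m a (of_real x)"
      using r(2) unfolding Q_split by (simp add: algebra_simps)
    ultimately have "norm (Ppoly m a (of_real x)) \<ge> c0 * ((x^m - r) + norm lam)"
      by (metis norm_minus_cancel)
    moreover have "c0 * ((x^m - r) + norm lam) \<ge> c0 * (x^m + norm lam)"
      using c0_pos r by (intro mult_left_mono) auto
    moreover have "c0 * (x^m + norm lam) > 0" using c0_pos W_pos by simp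
    ultimately show False using P by linarith
  qed
qed

lemma norm_powr_three_halves:
  fixes w :: complex assumes "w \<noteq> 0"
  shows "norm (w powr (3/2)) = norm w * sqrt (norm w)"
    "norm (w powr (1/2)) = sqrt (norm w)"
proof -
  have "norm (w powr (3/2)) = norm w powr (1 + 1/2)"
    by (subst norm_powr_real_powr') auto
  also have "\<dots> = norm w powr 1 * norm w powr (1/2)" by (rule powr_add)
  also have "\<dots> = norm w * sqrt (norm w)"
    using assms by (simp add: powr_half_sqrt)
  finally show "norm (w powr (3/2)) = norm w * sqrt (norm w)" .
  have "norm (w powr (1/2)) = norm w powr (1/2)"
    by (subst norm_powr_real_powr') auto
  then show "norm (w powr (1/2)) = sqrt (norm w)" by (simp add: powr_half_sqrt)
qed

lemma norms_gz_hz_dgz: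
  fixes m :: nat and a :: "nat \<Rightarrow> complex" and lam z :: complex
  defines "q \<equiv> norm (Qz m a lam z)" and "n1 \<equiv> norm (dQz m a z)" and "n2 \<equiv> norm (ddQz m a z)"
  assumes Q: "Qz m a lam z \<noteq> 0"
  shows "norm (gz m a lam z) = n1 / (8*q * sqrt q)"
    "norm (hz m a lam z) = n1 / (4*q)"
    "norm (dgz m a lam z) \<le> n2 / (8*q * sqrt q) + 3*n1^2 / (16*q^2 * sqrt q)"
proof -
  note pow = norm_powr_three_halves[OF Q, folded q_def]
  have q_pos: "q > 0" using Q by (simp add: q_def)
  show "norm (gz m a lam z) = n1 / (8*q * sqrt q)"
    by (simp add: gz_def norm_divide norm_mult pow n1_def)
  show "norm (hz m a lam z) = n1 / (4*q)"
    by (simp add: hz_def norm_divide norm_mult q_def n1_def)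
  have denom: "norm ((8 * Qz m a lam z powr (3/2)) ^ Suc (Suc 0)) = (8*q * sqrt q)^2"
    by (simp add: norm_power norm_mult pow power2_eq_square)
  have "norm (dgz m a lam z) \<le> (n2 * (8*q * sqrt q) + 8*((3/2) * sqrt q * n1) * n1) / (8*q * sqrt q)^2"
    unfolding dgz_def norm_divide denom
    by (rule divide_right_mono[OF order.trans[OF norm_triangle_ineq4]])
       (simp_all add: norm_mult pow n1_def n2_def)
  also have "\<dots> = n2 / (8*q * sqrt q) + 3*n1^2 / (16*q^2 * sqrt q)"
  proof -
    have "sqrt q * sqrt q = q" using q_pos by simp
    then show ?thesis using q_pos by (simp add: field_simps power2_eq_square)
  qed
  finally show "norm (dgz m a lam z) \<le> n2 / (8*q * sqrt q) + 3*n1^2 / (16*q^2 * sqrt q)" .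
qed

text \<open>Homogeneity bookkeeping: if |Q| \<ge> c E^2 e, |Q'| \<le> B1 E e and |Q''| \<le> B2 e (later
  e = E^(m-2), so that E^2 e = x^m + |lam|), then the expressions of norms_gz_hz_dgz for |g|,
  |h| |g| and |g'| decay like 1/(E sqrt(E^2 e)) resp. 1/(E^2 sqrt(E^2 e)).\<close>
lemma homogeneous_quotient_bounds:
  fixes n1 n2 q E e c B1 B2 :: real
  assumes c: "c > 0" and E: "E \<ge> 1" and e: "e > 0" and n1: "0 \<le> n1" "n1 \<le> B1*E*e"
    and n2: "0 \<le> n2" "n2 \<le> B2*e" and q: "q \<ge> c*E^2*e"
  shows "n1/(8*q * sqrt q) \<le> B1/(8*c * sqrt c) / (E * sqrt (E^2*e))"
    "n1/(4*q) * (n1/(8*q * sqrt q)) \<le> B1^2/(32*c^2 * sqrt c) / (E^2 * sqrt (E^2*e))"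
    "n2/(8*q * sqrt q) + 3*n1^2/(16*q^2 * sqrt q)
       \<le> (B2/(8*c * sqrt c) + 3*B1^2/(16*c^2 * sqrt c)) / (E^2 * sqrt (E^2*e))"
proof -
  define sW where "sW = sqrt (E^2*e)"
  have E0: "E > 0" using E by simp
  have sW0: "sW > 0" unfolding sW_def using E0 e by simp
  have cq: "c*E^2*e > 0" using c E0 e by simp
  have q0: "q > 0" using cq q by simp
  have sq: "sqrt q \<ge> sqrt c * sW"
    unfolding sW_def real_sqrt_mult[symmetric] using q by (simp add: mult.assoc)
  have sc: "sqrt c > 0" using c by simp
  have q32: "q * sqrt q \<ge> (c*E^2*e) * (sqrt c * sW)"
    by (rule mult_mono[OF q sq]) (use q0 sc sW0 in auto)
  have q52: "q^2 * sqrt q \<ge> (c*E^2*e)^2 * (sqrt c * sW)"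
    by (rule mult_mono[OF power_mono[OF q] sq]) (use q0 cq sc sW0 in auto)
  have pos32: "0 < (c*E^2*e) * (sqrt c * sW)" using cq sc sW0 by simp
  have pos52: "0 < (c*E^2*e)^2 * (sqrt c * sW)" using cq sc sW0 by (intro mult_pos_pos) auto
  have "n1/(8*q * sqrt q) \<le> (B1*E*e)/(8*((c*E^2*e) * (sqrt c * sW)))"
    by (rule frac_le) (use n1 q32 pos32 in auto)
  also have "\<dots> = B1/(8*c * sqrt c) / (E * sW)"
    using E0 e c sc sW0 by (simp add: field_simps power2_eq_square)
  finally show "n1/(8*q * sqrt q) \<le> B1/(8*c * sqrt c) / (E * sqrt (E^2*e))" unfolding sW_def .
  have "n1/(4*q) * (n1/(8*q * sqrt q)) = n1^2/(32*(q^2 * sqrt q))"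
    using q0 by (simp add: field_simps power2_eq_square)
  also have "\<dots> \<le> (B1*E*e)^2/(32*((c*E^2*e)^2 * (sqrt c * sW)))"
    by (rule frac_le) (use n1 q52 pos52 in \<open>auto intro: power_mono\<close>)
  also have "\<dots> = B1^2/(32*c^2 * sqrt c) / (E^2 * sW)"
    using E0 e c sc sW0 by (simp add: field_simps power2_eq_square)
  finally show "n1/(4*q) * (n1/(8*q * sqrt q)) \<le> B1^2/(32*c^2 * sqrt c) / (E^2 * sqrt (E^2*e))"
    unfolding sW_def .
  have "n2/(8*q * sqrt q) \<le> (B2*e)/(8*((c*E^2*e) * (sqrt c * sW)))"
    by (rule frac_le) (use n2 q32 pos32 in auto)
  also have "\<dots> = B2/(8*c * sqrt c) / (E^2 * sW)"
    using E0 e c sc sW0 by (simp add: field_simps power2_eq_square)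
  finally have first: "n2/(8*q * sqrt q) \<le> B2/(8*c * sqrt c) / (E^2 * sW)" .
  have "3*n1^2/(16*q^2 * sqrt q) \<le> 3*(B1*E*e)^2/(16*((c*E^2*e)^2 * (sqrt c * sW)))"
    by (rule frac_le) (use n1 q52 pos52 in \<open>auto intro: power_mono\<close>)
  also have "\<dots> = 3*B1^2/(16*c^2 * sqrt c) / (E^2 * sW)"
    using E0 e c sc sW0 by (simp add: field_simps power2_eq_square)
  finally have second: "3*n1^2/(16*q^2 * sqrt q) \<le> 3*B1^2/(16*c^2 * sqrt c) / (E^2 * sW)" .
  show "n2/(8*q * sqrt q) + 3*n1^2/(16*q^2 * sqrt q)
       \<le> (B2/(8*c * sqrt c) + 3*B1^2/(16*c^2 * sqrt c)) / (E^2 * sqrt (E^2*e))"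
    using add_mono[OF first second] unfolding sW_def by (simp add: add_divide_distrib)
qed

text \<open>Each of the four numerators of s_jk is bounded by |h||g| + |g'| once |g| \<le> 1/2, and then
  the denominator satisfies |1 + g^2| \<ge> 3/4.\<close>
lemma norm_s_entry_le:
  fixes g h g' N :: complex
  assumes g: "norm g \<le> 1/2" and hg: "norm h * norm g \<le> X" and g': "norm g' \<le> Y"
    and N: "N \<in> {h*g - g'*g, - h*g^2 + g', - h*g^2 - g', - h*g - g'*g}"
  shows "norm (N / (1 + g^2)) \<le> 2*(X+Y)"
proof -
  have "(norm g)^2 \<le> (1/2)^2" by (rule power_mono[OF g]) simp
  then have "norm (g^2) \<le> 1/4" by (simp add: norm_power power_divide)
  then have denom: "norm (1 + g^2) \<ge> 3/4"
    using norm_diff_ineq[of "1::complex" "g^2"] by simp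
  have X0: "X \<ge> 0" using hg by (meson order.trans mult_nonneg_nonneg norm_ge_zero)
  have Y0: "Y \<ge> 0" using g' norm_ge_zero order.trans by blast
  have hgg: "norm h * norm g * norm g \<le> norm h * norm g"
    using g by (intro mult_left_le) auto
  have g'g: "norm g' * norm g \<le> norm g'"
    using g by (intro mult_left_le) auto
  have "norm N \<le> norm h * norm g + norm g'"
    using N
  proof (elim insertE emptyE)
    assume "N = h*g - g'*g"
    then show ?thesis using g'g norm_triangle_ineq4[of "h*g" "g'*g"] by (simp add: norm_mult)
  next
    assume "N = - h*g^2 + g'"
    then show ?thesis using hgg norm_triangle_ineq[of "- h*g^2" "g'"]
      by (simp add: norm_mult norm_power power2_eq_square mult.assoc)
  next
    assume "N = - h*g^2 - g'"
    then show ?thesis using hgg norm_triangle_ineq4[of "- h*g^2" "g'"]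
      by (simp add: norm_mult norm_power power2_eq_square mult.assoc)
  next
    assume "N = - h*g - g'*g"
    then show ?thesis using g'g norm_triangle_ineq4[of "- h*g" "g'*g"] by (simp add: norm_mult)
  qed
  then have numer: "norm N \<le> X + Y" using hg g' by simp
  have "norm (N / (1 + g^2)) = norm N / norm (1 + g^2)" by (simp add: norm_divide)
  also have "\<dots> \<le> (X+Y) / (3/4)"
    by (rule frac_le) (use numer denom X0 Y0 in auto)
  also have "\<dots> \<le> 2*(X+Y)" using X0 Y0 by simp
  finally show ?thesis .
qed

lemma root_weight:
  fixes x L :: real and m :: nat
  defines "E \<equiv> (x^m + L) powr (1/m)"
  assumes x: "x \<ge> 0" and L: "L > 0" and m: "m > 0"
  shows "E^m = x^m + L" "x \<le> E" "L powr (1/m) \<le> E" "E > 0"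
proof -
  have W: "x^m + L > 0" using x L by (simp add: add_nonneg_pos)
  then show E_pos: "E > 0" by (simp add: E_def)
  have "E^m = E powr (real m)" using E_pos by (simp add: powr_realpow)
  also have "\<dots> = x^m + L" unfolding E_def using W m by (simp add: powr_powr)
  finally show E_pow: "E^m = x^m + L" .
  then have "x^m \<le> E^m" using L by simp
  then show "x \<le> E" using power_mono_iff[of x E m] x E_pos m by simp
  show "L powr (1/m) \<le> E" unfolding E_def by (rule powr_mono2) (use x L in auto)
qed

text \<open>Size of Q, Q', Q'' at x \<ge> 0 in terms of E, once |lam| is large compared with the
  coefficient mass A.  The exponent m is split as 2 + (m-2) for later bookkeeping.\<close>
lemma Qz_estimates:
  fixes m :: nat and a :: "nat \<Rightarrow> complex" and lam :: complex and \<delta> A x :: real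
  defines "c0 \<equiv> sector_const \<delta>" and "E \<equiv> (x^m + norm lam) powr (1/m)"
  assumes m: "m \<ge> 3" and \<delta>: "0 < \<delta>" "\<delta> \<le> pi" and A: "(\<Sum>i=1..m. norm (a i)) \<le> A"
    and Arg: "\<bar>Arg lam\<bar> \<le> pi - \<delta>" and lam: "norm lam \<ge> 1" "norm lam \<ge> (2*A/c0)^m"
    and x: "x \<ge> 0"
  shows "Qz m a lam (of_real x) \<notin> \<real>\<^sub>\<le>\<^sub>0"
    "norm (Qz m a lam (of_real x)) \<ge> c0/2 * E^2 * E^(m-2)"
    "norm (dQz m a (of_real x)) \<le> real m * (1+A) * E * E^(m-2)"
    "norm (ddQz m a (of_real x)) \<le> real m * real m * (1+A) * E^(m-2)"
    "E \<ge> 1" "E^2 * E^(m-2) = x^m + norm lam"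
proof -
  have L_pos: "norm lam > 0" and m_pos: "m > 0" using lam m by auto
  note weight = root_weight[OF x L_pos m_pos, folded E_def]
  have E_pow: "E^m = x^m + norm lam" and xE: "x \<le> E" using weight by auto
  have "1 \<le> norm lam powr (1/m)" using lam by (simp add: ge_one_powr_ge_zero)
  then show E1: "E \<ge> 1" using weight(3) by linarith
  have "2 + (m-2) = m" "Suc (m-2) = m - 1" using m by auto
  then have E_m: "E^m = E^2 * E^(m-2)" and E_m1: "E^(m-1) = E * E^(m-2)"
    by (metis power_add, metis power_Suc)
  then show E_split: "E^2 * E^(m-2) = x^m + norm lam" using E_pow by simp
  have c0_pos: "c0 > 0" unfolding c0_def by (rule sector_const_pos[OF \<delta>])
  have A0: "A \<ge> 0" using A sum_nonneg[of "{1..m}" "\<lambda>i. norm (a i)"] by simp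
  note bounds = polynomial_part_bounds[OF x xE E1 A]
  have "x^m \<ge> 0" using x by simp
  then have "(2*A/c0)^m \<le> E^m" using E_pow lam by linarith
  then have "2*A/c0 \<le> E" using power_mono_iff[of "2*A/c0" E m] A0 c0_pos E1 m by simp
  then have "A \<le> c0/2 * E" using c0_pos by (simp add: field_simps)
  then have "A * E^(m-1) \<le> (c0/2 * E) * E^(m-1)"
    using E1 by (intro mult_right_mono) auto
  also have "\<dots> = c0/2 * (x^m + norm lam)"
    using E_m1 E_m E_split by (simp add: mult.assoc power2_eq_square)
  finally have "norm (Ppoly m a (of_real x)) \<le> c0/2 * (x^m + norm lam)"
    using bounds(1) by linarith
  note lower = Qz_lower_bound[OF x \<delta> Arg lam(1), folded c0_def, OF this]
  show "Qz m a lam (of_real x) \<notin> \<real>\<^sub>\<le>\<^sub>0" by (rule lower(2))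
  show "norm (Qz m a lam (of_real x)) \<ge> c0/2 * E^2 * E^(m-2)"
    using lower(1) E_split by (simp add: mult.assoc)
  show "norm (dQz m a (of_real x)) \<le> real m * (1+A) * E * E^(m-2)"
    using bounds(2) E_m1 by (simp add: mult.assoc)
  show "norm (ddQz m a (of_real x)) \<le> real m * real m * (1+A) * E^(m-2)"
    by (rule bounds(3))
qed

definition pointwise_const :: "nat \<Rightarrow> real \<Rightarrow> real \<Rightarrow> real" where
  "pointwise_const m \<delta> A =
     (let c = sector_const \<delta> / 2; B1 = real m * (1+A); B2 = real m * real m * (1+A)
      in 2*(B1^2/(32*c^2 * sqrt c) + (B2/(8*c * sqrt c) + 3*B1^2/(16*c^2 * sqrt c))))"

definition lam_threshold :: "nat \<Rightarrow> real \<Rightarrow> real \<Rightarrow> real" where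
  "lam_threshold m \<delta> A =
     (let c0 = sector_const \<delta>; c = c0/2; B1 = real m * (1+A)
      in max 1 (max ((2*A/c0)^m) ((B1/(4*c * sqrt c))^2)))"

lemma s_entry_pointwise_bound:
  fixes m j k :: nat and a :: "nat \<Rightarrow> complex" and lam :: complex and \<delta> A x :: real
  defines "W \<equiv> x^m + norm lam" and "E \<equiv> (x^m + norm lam) powr (1/m)"
  assumes m: "m \<ge> 3" and \<delta>: "0 < \<delta>" "\<delta> \<le> pi" and A: "(\<Sum>i=1..m. norm (a i)) \<le> A"
    and Arg: "\<bar>Arg lam\<bar> \<le> pi - \<delta>" and R: "norm lam \<ge> lam_threshold m \<delta> A"
    and x: "x \<ge> 0"
  shows "Qz m a lam (of_real x) \<notin> \<real>\<^sub>\<le>\<^sub>0"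
    "norm (gz m a lam (of_real x)) \<le> 1/2"
    "norm (sf m a j k lam x) \<le> pointwise_const m \<delta> A / (E^2 * sqrt W)"
proof -
  define c where "c = sector_const \<delta> / 2"
  define B1 where "B1 = real m * (1+A)"
  define B2 where "B2 = real m * real m * (1+A)"
  have c_pos: "c > 0" using sector_const_pos[OF \<delta>] by (simp add: c_def)
  have lam: "norm lam \<ge> 1" "norm lam \<ge> (2*A/sector_const \<delta>)^m" "(B1/(4*c * sqrt c))^2 \<le> norm lam"
    using R by (simp_all add: lam_threshold_def Let_def c_def B1_def)
  have "sqrt ((B1/(4*c * sqrt c))^2) \<le> sqrt (norm lam)" using lam(3) by (rule real_sqrt_le_mono)
  then have lam_g: "B1/(4*c * sqrt c) \<le> sqrt (norm lam)"
    by (metis abs_ge_self order.trans real_sqrt_abs)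
  note est = Qz_estimates[OF m \<delta> A Arg lam(1,2) x, folded E_def W_def,
      folded c_def B1_def B2_def]
  show cut: "Qz m a lam (of_real x) \<notin> \<real>\<^sub>\<le>\<^sub>0" by (rule est(1))
  have A0: "A \<ge> 0" using A sum_nonneg[of "{1..m}" "\<lambda>i. norm (a i)"] by simp
  have E1: "E \<ge> 1" and e_pos: "E^(m-2) > 0" using est(5) by auto
  have "Qz m a lam (of_real x) \<noteq> 0" using cut by auto
  note norms = norms_gz_hz_dgz[OF this]
  note hom = homogeneous_quotient_bounds[OF c_pos E1 e_pos norm_ge_zero _ norm_ge_zero _ _,
      OF est(3) est(4), unfolded est(6)]
  have WL: "norm lam \<le> W" using x by (simp add: W_def)
  have "sqrt (norm lam) \<le> sqrt W" using WL by simp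
  also have "\<dots> \<le> E * sqrt W" using E1 WL lam(1) by (simp add: mult_le_cancel_right1)
  finally have sqrt_lam: "sqrt (norm lam) \<le> E * sqrt W" .
  have "norm (gz m a lam (of_real x)) \<le> B1/(8*c * sqrt c) / (E * sqrt W)"
    using norms(1) hom(1)[OF est(2)] by simp
  also have "\<dots> \<le> B1/(8*c * sqrt c) / sqrt (norm lam)"
    using c_pos A0 lam(1) E1 WL
    by (intro divide_left_mono[OF sqrt_lam]) (auto simp: B1_def intro!: mult_pos_pos)
  also have "\<dots> \<le> 1/2"
  proof -
    have "0 < c * (sqrt c * (sqrt (norm lam) * 4))" using c_pos lam(1) by (intro mult_pos_pos) auto
    then show ?thesis using lam_g c_pos by (simp add: field_simps)
  qed
  finally show g_half: "norm (gz m a lam (of_real x)) \<le> 1/2" .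
  have hg: "norm (hz m a lam (of_real x)) * norm (gz m a lam (of_real x))
      \<le> B1^2/(32*c^2 * sqrt c) / (E^2 * sqrt W)"
    using norms(1,2) hom(2)[OF est(2)] by simp
  have dg: "norm (dgz m a lam (of_real x))
      \<le> (B2/(8*c * sqrt c) + 3*B1^2/(16*c^2 * sqrt c)) / (E^2 * sqrt W)"
    by (rule order.trans[OF norms(3) hom(3)[OF est(2)]])
  have "norm (sz m a lam j k (of_real x))
      \<le> 2*(B1^2/(32*c^2 * sqrt c) / (E^2 * sqrt W)
           + (B2/(8*c * sqrt c) + 3*B1^2/(16*c^2 * sqrt c)) / (E^2 * sqrt W))"
    unfolding sz_def Let_def by (rule norm_s_entry_le[OF g_half hg dg]) auto
  then show "norm (sf m a j k lam x) \<le> pointwise_const m \<delta> A / (E^2 * sqrt W)"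
    unfolding sf_eq_sz[OF cut] pointwise_const_def Let_def c_def[symmetric] B1_def[symmetric]
      B2_def[symmetric] by (simp only: add_divide_distrib[symmetric] times_divide_eq_right)
qed

lemma weight_le_cauchy_kernel:
  fixes x L :: real and m :: nat
  defines "W \<equiv> x^m + L" and "E \<equiv> (x^m + L) powr (1/m)" and "x0 \<equiv> L powr (1/m)"
  assumes x: "x \<ge> 0" and L: "L > 0" and m: "m > 0"
  shows "1 / (E^2 * sqrt W) \<le> (2 / sqrt L) * (1 / (x0^2 + x^2))"
proof -
  note weight = root_weight[OF x L m, folded E_def x0_def]
  have x0_pos: "x0 > 0" using L by (simp add: x0_def)
  have "x0^2 \<le> E^2" "x^2 \<le> E^2"
    using power_mono[OF weight(3), of 2] power_mono[OF weight(2), of 2] x x0_pos by auto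
  then have "x0^2 + x^2 \<le> 2 * E^2" by linarith
  moreover have "sqrt L \<le> sqrt W" using x by (simp add: W_def)
  ultimately have le: "(x0^2 + x^2) * sqrt L \<le> (2 * E^2) * sqrt W"
    using L by (intro mult_mono) auto
  have pos1: "0 < (x0^2 + x^2) * sqrt L" using x0_pos L by (simp add: add_pos_nonneg)
  have pos2: "0 < (2 * E^2) * sqrt W" using weight(4) x L by (simp add: W_def add_nonneg_pos)
  have "2 / ((2 * E^2) * sqrt W) \<le> 2 / ((x0^2 + x^2) * sqrt L)"
    by (rule divide_left_mono[OF le _ mult_pos_pos[OF pos2 pos1]]) simp
  then show ?thesis by (simp add: mult.commute)
qed

lemma half_line_integral_le_cauchy:
  fixes f :: "real \<Rightarrow> real" and K x0 :: real
  assumes cont: "continuous_on {0..} f" and x0: "x0 > 0"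
    and bound: "\<And>x. x \<ge> 0 \<Longrightarrow> \<bar>f x\<bar> \<le> K * (1/(x0^2 + x^2))"
  shows "set_integrable lborel {0..} f" "(\<integral>x\<in>{0..}. f x \<partial>lborel) \<le> K * (pi/(2*x0))"
proof -
  note cauchy = integral_inverse_sum_squares[OF x0]
  have majorant: "set_integrable lborel {0..} (\<lambda>x. K * (1/(x0^2 + x^2)))"
    by (rule set_integrable_mult_right) (rule cauchy(1))
  show int: "set_integrable lborel {0..} f"
    unfolding set_integrable_def
  proof (rule Bochner_Integration.integrable_bound[OF majorant[unfolded set_integrable_def]])
    show "(\<lambda>x. indicator {0..} x *\<^sub>R f x) \<in> borel_measurable lborel"
      using borel_measurable_continuous_on_indicator[OF _ cont] by simp
    have "norm (indicator {0..} x *\<^sub>R f x) \<le> norm (indicator {0..} x *\<^sub>R (K * (1/(x0^2 + x^2))))"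
      for x :: real
      using bound[of x] abs_ge_self[of "K * (1/(x0^2 + x^2))"]
      by (cases "x \<ge> 0") (auto simp: indicator_def)
    then show "AE x in lborel. norm (indicator {0..} x *\<^sub>R f x)
        \<le> norm (indicator {0..} x *\<^sub>R (K * (1/(x0^2 + x^2))))"
      by simp
  qed
  have "(\<integral>x\<in>{0..}. f x \<partial>lborel) \<le> (\<integral>x\<in>{0..}. K * (1/(x0^2 + x^2)) \<partial>lborel)"
    by (rule set_integral_mono[OF int majorant]) (metis atLeast_iff abs_le_D1 bound)
  also have "\<dots> = K * (pi/(2*x0))"
    by (subst set_integral_mult_right) (simp only: cauchy(2))
  finally show "(\<integral>x\<in>{0..}. f x \<partial>lborel) \<le> K * (pi/(2*x0))" .
qed

lemma continuous_on_norm_sf: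
  assumes cut: "\<And>x. x \<ge> 0 \<Longrightarrow> Qz m a lam (of_real x) \<notin> \<real>\<^sub>\<le>\<^sub>0"
    and g_half: "\<And>x. x \<ge> 0 \<Longrightarrow> norm (gz m a lam (of_real x)) \<le> 1/2"
  shows "continuous_on {0..} (\<lambda>x. norm (sf m a j k lam x))"
proof -
  have "continuous_on {0..} (\<lambda>x. norm (sz m a lam j k (of_real x)))"
  proof (intro continuous_at_imp_continuous_on ballI)
    fix x :: real assume "x \<in> {0..}"
    then have x: "x \<ge> 0" by simp
    have "(norm (gz m a lam (of_real x)))^2 \<le> (1/2)^2"
      by (rule power_mono[OF g_half[OF x]]) simp
    then have small: "norm ((gz m a lam (of_real x))^2) \<le> 1/4" by (simp add: norm_power power_divide)
    have "1 + (gz m a lam (of_real x))^2 \<noteq> 0"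
    proof
      assume "1 + (gz m a lam (of_real x))^2 = 0"
      then have "(gz m a lam (of_real x))^2 = -1" by (simp add: add_eq_0_iff)
      then show False using small by simp
    qed
    then have "isCont (sz m a lam j k) (of_real x)" by (rule isCont_sz[OF cut[OF x]])
    then have "isCont (\<lambda>y. sz m a lam j k (of_real y)) x"
      by (rule isCont_o2[rotated]) (intro continuous_intros)
    then show "isCont (\<lambda>x. norm (sz m a lam j k (of_real x))) x" by (rule isCont_norm)
  qed
  moreover have "\<And>x. x \<in> {0..} \<Longrightarrow> norm (sf m a j k lam x) = norm (sz m a lam j k (of_real x))"
    using sf_eq_sz cut by simp
  ultimately show ?thesis by (metis (no_types, lifting) continuous_on_cong)
qed

lemma pointwise_const_nonneg:
  assumes "0 < \<delta>" "\<delta> \<le> pi" "A \<ge> 0"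
  shows "pointwise_const m \<delta> A \<ge> 0"
  using sector_const_pos[OF assms(1,2)] assms(3) by (simp add: pointwise_const_def Let_def)

lemma s_entry_integral_bound:
  fixes m j k :: nat and a :: "nat \<Rightarrow> complex" and lam :: complex and \<delta> A :: real
  assumes m: "m \<ge> 3" and \<delta>: "0 < \<delta>" "\<delta> \<le> pi" and A: "(\<Sum>i=1..m. norm (a i)) \<le> A"
    and Arg: "\<bar>Arg lam\<bar> \<le> pi - \<delta>" and R: "norm lam \<ge> lam_threshold m \<delta> A"
  shows "set_integrable lborel {0..} (\<lambda>x. norm (sf m a j k lam x))"
    "(\<integral>x\<in>{0..}. norm (sf m a j k lam x) \<partial>lborel)
       \<le> pi * pointwise_const m \<delta> A * norm lam powr (- (1/2 + 1/real m))"
proof -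
  define D where "D = pointwise_const m \<delta> A"
  define L where "L = norm lam"
  define x0 where "x0 = L powr (1/m)"
  note pointwise = s_entry_pointwise_bound[OF m \<delta> A Arg R, folded D_def L_def]
  have "1 \<le> L" using R by (simp add: L_def lam_threshold_def Let_def)
  then have L_pos: "L > 0" by linarith
  have m_pos: "m > 0" using m by simp
  have x0_pos: "x0 > 0" using L_pos by (simp add: x0_def)
  have "A \<ge> 0" using A sum_nonneg[of "{1..m}" "\<lambda>i. norm (a i)"] by simp
  then have D_nonneg: "D \<ge> 0" unfolding D_def by (rule pointwise_const_nonneg[OF \<delta>])
  have bound: "\<bar>norm (sf m a j k lam x)\<bar> \<le> (2 * D / sqrt L) * (1/(x0^2 + x^2))" if x: "x \<ge> 0" for x
  proof -
    have "norm (sf m a j k lam x) \<le> D * (1 / (((x^m + L) powr (1/m))^2 * sqrt (x^m + L)))"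
      using pointwise(3)[OF x] by simp
    also have "\<dots> \<le> D * ((2 / sqrt L) * (1/(x0^2 + x^2)))"
      by (rule mult_left_mono[OF weight_le_cauchy_kernel[OF x L_pos m_pos, folded x0_def] D_nonneg])
    finally show ?thesis by (simp add: mult.commute)
  qed
  note cauchy = half_line_integral_le_cauchy[OF continuous_on_norm_sf[OF pointwise(1,2)] x0_pos bound]
  show "set_integrable lborel {0..} (\<lambda>x. norm (sf m a j k lam x))" by (rule cauchy(1))
  have "norm lam powr (- (1/2 + 1/real m)) = 1 / L powr (1/2 + 1/real m)"
    unfolding L_def by (rule powr_minus_divide)
  also have "\<dots> = 1 / (L powr (1/2) * L powr (1/real m))" by (simp only: powr_add)
  also have "\<dots> = 1 / (sqrt L * x0)" using L_pos by (simp add: x0_def powr_half_sqrt)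
  finally have "(2 * D / sqrt L) * (pi/(2*x0)) = pi * D * norm lam powr (- (1/2 + 1/real m))"
    using L_pos x0_pos by (simp add: field_simps)
  then show "(\<integral>x\<in>{0..}. norm (sf m a j k lam x) \<partial>lborel)
       \<le> pi * D * norm lam powr (- (1/2 + 1/real m))"
    using cauchy(2) by simp
qed

text \<open>On a compact set of coefficient vectors (product topology) the mass sum |a_i| is bounded,
  since it is a continuous function of finitely many coordinates.\<close>
lemma compact_coefficient_mass_bounded:
  fixes K :: "(nat \<Rightarrow> complex) set"
  assumes "compact K"
  obtains A where "\<And>a. a \<in> K \<Longrightarrow> (\<Sum>i=1..m. norm (a i)) \<le> A"
proof -
  have "continuous_on K (\<lambda>a. \<Sum>i=1..m. norm (a i))"
    by (intro continuous_intros continuous_on_subset[OF continuous_on_product_coordinates]) auto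
  then have "compact ((\<lambda>a. \<Sum>i=1..m. norm (a i)) ` K)"
    by (rule compact_continuous_image[OF _ assms])
  then obtain A where A: "\<forall>y \<in> (\<lambda>a. \<Sum>i=1..m. norm (a i)) ` K. norm y \<le> A"
    using compact_imp_bounded bounded_iff by metis
  show ?thesis
  proof (rule that)
    fix a assume "a \<in> K"
    then have "norm (\<Sum>i=1..m. norm (a i)) \<le> A" using A by blast
    then show "(\<Sum>i=1..m. norm (a i)) \<le> A" by simp
  qed
qed

theorem mainTheorem8:
  fixes m :: nat and \<delta> :: real and K :: "(nat \<Rightarrow> complex) set"
  assumes "m \<ge> 3"
    and "0 < \<delta>" and "\<delta> \<le> pi / (m + 2)"
    and "compact K"
  shows "\<exists>C R. \<forall>a\<in>K. \<forall>lam. norm lam \<ge> R \<and> \<bar>Arg lam\<bar> \<le> pi - \<delta> \<longrightarrow>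
           (\<forall>j\<in>{1,2}. \<forall>k\<in>{1,2}.
              set_integrable lborel {0..} (\<lambda>x. norm (sf m a j k lam x)) \<and>
              (\<integral>x\<in>{0..}. norm (sf m a j k lam x) \<partial>lborel)
                \<le> C * norm lam powr (- (1/2 + 1/real m)))"
proof -
  obtain A where A: "\<And>a. a \<in> K \<Longrightarrow> (\<Sum>i=1..m. norm (a i)) \<le> A"
    using compact_coefficient_mass_bounded[OF assms(4)] by blast
  have "pi / (m + 2) \<le> pi / 1" by (rule divide_left_mono) auto
  then have \<delta>: "0 < \<delta>" "\<delta> \<le> pi" using assms(2,3) by simp_all
  show ?thesis
    using s_entry_integral_bound[OF assms(1) \<delta> A]
    by (intro exI[of _ "pi * pointwise_const m \<delta> A"] exI[of _ "lam_threshold m \<delta> A"]) blast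
qed

end
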